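(* Let $T$ be a tree with at least two vertices. If $\mathcal{M}$ is a maximal $2$-matching of $T$, then there exist leaves $u\neq v$ of $T$ such that $E(P_{u,v})\subseteq\mathcal{M}$, where $P_{u,v}$ is the unique path in $T$ joining $u$ and $v$.
   Context: A $2$-matching of a graph is a set of edges such that every vertex is incident to at most two of them. A $2$-matching $\mathcal{M}$ is maximal if there is no $2$-matching $\mathcal{N}$ with $\mathcal{M}\subsetneq\mathcal{N}$. A leaf is a vertex of degree one. *)

theory Defs
  imports Main
begin

definition simple_graph :: "'a set \<Rightarrow> 'a set set \<Rightarrow> bool" where
  "simple_graph V E \<longleftrightarrow> finite V \<and>
     (\<forall>e\<in>E. \<exists>x y. x \<noteq> y \<and> x \<in> V \<and> y \<in> V \<and> e = {x, y})"

fun path_edges :: "'a list \<Rightarrow> 'a set set" where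
  "path_edges (x # y # xs) = insert {x, y} (path_edges (y # xs))"
| "path_edges _ = {}"

definition is_path :: "'a set \<Rightarrow> 'a set set \<Rightarrow> 'a list \<Rightarrow> 'a \<Rightarrow> 'a \<Rightarrow> bool" where
  "is_path V E p u v \<longleftrightarrow> p \<noteq> [] \<and> hd p = u \<and> last p = v \<and> distinct p \<and>
     set p \<subseteq> V \<and> path_edges p \<subseteq> E"

definition connected_graph :: "'a set \<Rightarrow> 'a set set \<Rightarrow> bool" where
  "connected_graph V E \<longleftrightarrow> (\<forall>u\<in>V. \<forall>v\<in>V. \<exists>p. is_path V E p u v)"

definition is_cycle :: "'a set \<Rightarrow> 'a set set \<Rightarrow> 'a list \<Rightarrow> bool" where
  "is_cycle V E c \<longleftrightarrow> length c \<ge> 3 \<and> distinct c \<and> set c \<subseteq> V \<and>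
     path_edges c \<subseteq> E \<and> {last c, hd c} \<in> E"

definition is_tree :: "'a set \<Rightarrow> 'a set set \<Rightarrow> bool" where
  "is_tree V E \<longleftrightarrow> simple_graph V E \<and> V \<noteq> {} \<and> connected_graph V E \<and>
     (\<nexists>c. is_cycle V E c)"

definition degree :: "'a set set \<Rightarrow> 'a \<Rightarrow> nat" where
  "degree E v = card {e \<in> E. v \<in> e}"

definition is_leaf :: "'a set \<Rightarrow> 'a set set \<Rightarrow> 'a \<Rightarrow> bool" where
  "is_leaf V E v \<longleftrightarrow> v \<in> V \<and> degree E v = 1"

definition two_matching :: "'a set set \<Rightarrow> 'a set set \<Rightarrow> bool" where
  "two_matching E M \<longleftrightarrow> M \<subseteq> E \<and> (\<forall>v. card {e \<in> M. v \<in> e} \<le> 2)"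

definition maximal_two_matching :: "'a set set \<Rightarrow> 'a set set \<Rightarrow> bool" where
  "maximal_two_matching E M \<longleftrightarrow> two_matching E M \<and>
     \<not> (\<exists>N. two_matching E N \<and> M \<subset> N)"

end

theory Submission
  imports Defs
begin

text \<open>Call a path admissible if each of its edges outside \<open>M\<close> leads into a vertex that
  is saturated by \<open>M\<close>. Take an admissible path \<open>p\<close> with as many edges outside \<open>M\<close> as
  possible and, among those, of maximal length. Whenever an admissible path \<open>q\<close> with at
  least as many non-\<open>M\<close> edges ends with an \<open>M\<close>-edge in a vertex \<open>x\<close> of \<open>M\<close>-degree at
  most one, \<open>x\<close> is a leaf: another neighbour \<open>y\<close> of \<open>x\<close> is joined to \<open>x\<close> outside \<open>M\<close>, so
  by maximality of \<open>M\<close> it is saturated, and \<open>q\<close> followed by \<open>y\<close> would beat \<open>p\<close>.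
  Maximality of \<open>p\<close> makes its end such a vertex. Walking back along the final \<open>M\<close>-segment
  of \<open>p\<close> to its first vertex \<open>c\<close> and continuing along \<open>M\<close> beyond \<open>c\<close> until the
  \<open>M\<close>-degree drops below two yields an \<open>M\<close>-path whose far end is a leaf as well, because
  replacing the final segment of \<open>p\<close> by this continuation gives an admissible path with the
  same number of non-\<open>M\<close> edges. Absence of cycles keeps all these walks simple.\<close>

definition simple_path :: "'a set \<Rightarrow> 'a set set \<Rightarrow> 'a list \<Rightarrow> bool" where
  "simple_path V E p \<longleftrightarrow> p \<noteq> [] \<and> distinct p \<and> set p \<subseteq> V \<and> path_edges p \<subseteq> E"

fun unmatched_count :: "'a set set \<Rightarrow> 'a list \<Rightarrow> nat" where
  "unmatched_count M (x # y # xs) = (if {x, y} \<in> M then 0 else 1) + unmatched_count M (y # xs)"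
| "unmatched_count M _ = 0"

fun admissible :: "'a set set \<Rightarrow> 'a list \<Rightarrow> bool" where
  "admissible M (x # y # xs) \<longleftrightarrow> ({x, y} \<in> M \<or> degree M y = 2) \<and> admissible M (y # xs)"
| "admissible M _ \<longleftrightarrow> True"

lemma is_path_iff_simple_path:
  "is_path V E p u v \<longleftrightarrow> simple_path V E p \<and> hd p = u \<and> last p = v"
  unfolding is_path_def simple_path_def by auto

lemma path_edges_append:
  "xs \<noteq> [] \<Longrightarrow> path_edges (xs @ ys) = path_edges xs \<union> path_edges (last xs # ys)"
  by (induction xs rule: path_edges.induct) auto

lemma unmatched_count_append:
  "xs \<noteq> [] \<Longrightarrow> unmatched_count M (xs @ ys) = unmatched_count M xs + unmatched_count M (last xs # ys)"
  by (induction xs rule: path_edges.induct) auto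

lemma admissible_append:
  "xs \<noteq> [] \<Longrightarrow> admissible M (xs @ ys) \<longleftrightarrow> admissible M xs \<and> admissible M (last xs # ys)"
  by (induction xs rule: path_edges.induct) auto

lemma path_edges_snoc:
  "xs \<noteq> [] \<Longrightarrow> path_edges (xs @ [y]) = insert {last xs, y} (path_edges xs)"
  by (simp add: path_edges_append)

lemma unmatched_count_snoc:
  "xs \<noteq> [] \<Longrightarrow> unmatched_count M (xs @ [y]) = unmatched_count M xs + (if {last xs, y} \<in> M then 0 else 1)"
  by (simp add: unmatched_count_append)

lemma admissible_snoc:
  "xs \<noteq> [] \<Longrightarrow> admissible M (xs @ [y]) \<longleftrightarrow> admissible M xs \<and> ({last xs, y} \<in> M \<or> degree M y = 2)"
  by (simp add: admissible_append)

lemma unmatched_count_eq_0_iff: "unmatched_count M xs = 0 \<longleftrightarrow> path_edges xs \<subseteq> M"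
  by (induction xs rule: path_edges.induct) auto

lemma admissible_if_path_edges_subset: "path_edges xs \<subseteq> M \<Longrightarrow> admissible M xs"
  by (induction xs rule: path_edges.induct) auto

lemma admissible_replace_matched_tail:
  assumes "admissible M (a @ c # b)" "path_edges (c # r) \<subseteq> M"
  shows "admissible M (a @ c # r)"
proof -
  have "admissible M (a @ [c])" using assms(1) admissible_append[of "a @ [c]" M b] by simp
  then show ?thesis
    using admissible_append[of "a @ [c]" M r] admissible_if_path_edges_subset[OF assms(2)] by simp
qed

lemma unmatched_count_replace_matched_tail:
  assumes "path_edges (c # b) \<subseteq> M" "path_edges (c # r) \<subseteq> M"
  shows "unmatched_count M (a @ c # r) = unmatched_count M (a @ c # b)"
proof -
  have "unmatched_count M (c # r) = 0" "unmatched_count M (c # b) = 0"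
    using assms by (simp_all only: unmatched_count_eq_0_iff)
  then show ?thesis
    using unmatched_count_append[of "a @ [c]" M b] unmatched_count_append[of "a @ [c]" M r] by simp
qed

lemma admissible_unmatched_entry:
  assumes "admissible M (a @ c # b)" "a \<noteq> []" "{last a, c} \<notin> M"
  shows "degree M c = 2"
proof -
  have "admissible M (a @ [c])" using assms(1) admissible_append[of "a @ [c]" M b] by simp
  then show ?thesis using admissible_snoc[OF assms(2), of M c] assms(3) by simp
qed

lemma path_edges_append_subset_left: "path_edges xs \<subseteq> path_edges (xs @ ys)"
  by (cases "xs = []") (auto simp: path_edges_append)

lemma path_edges_append_subset_right: "path_edges ys \<subseteq> path_edges (xs @ ys)"
proof (induction xs)
  case (Cons x xs)
  then show ?case by (cases "xs @ ys") auto
qed simp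

lemma path_edges_rev: "path_edges (rev xs) = path_edges xs"
proof (induction xs)
  case (Cons x xs)
  show ?case
  proof (cases xs)
    case (Cons y ys)
    then show ?thesis
      using Cons.IH path_edges_snoc[of "rev xs" x] by (simp add: last_rev insert_commute)
  qed simp
qed simp

lemma last_edge_in_path_edges:
  assumes "2 \<le> length xs"
  shows "{last (butlast xs), last xs} \<in> path_edges xs"
proof -
  have "butlast xs \<noteq> []" using assms by (cases xs) auto
  then show ?thesis
    using path_edges_snoc[of "butlast xs" "last xs"] assms by (cases "xs = []") auto
qed

lemma distinct_hd_ne_last: "distinct xs \<Longrightarrow> 2 \<le> length xs \<Longrightarrow> hd xs \<noteq> last xs"
  by (cases xs) auto

lemma split_at_last_unmatched_edge:
  "xs \<noteq> [] \<Longrightarrow> \<exists>a c b. xs = a @ c # b \<and> path_edges (c # b) \<subseteq> M \<and> (a = [] \<or> {last a, c} \<notin> M)"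
proof (induction xs)
  case (Cons x xs)
  show ?case
  proof (cases xs)
    case Nil
    then show ?thesis by (intro exI[of _ "[]"]) auto
  next
    case (Cons y ys)
    then obtain a c b where acb: "xs = a @ c # b" "path_edges (c # b) \<subseteq> M" "a = [] \<or> {last a, c} \<notin> M"
      using Cons.IH by blast
    show ?thesis
    proof (cases "a = [] \<and> {x, c} \<in> M")
      case True
      then show ?thesis using acb by (intro exI[of _ "[]"] exI[of _ x] exI[of _ xs]) auto
    next
      case False
      then show ?thesis using acb by (intro exI[of _ "x # a"] exI[of _ c] exI[of _ b]) auto
    qed
  qed
qed simp

lemma simple_path_snoc:
  "xs \<noteq> [] \<Longrightarrow> simple_path V E (xs @ [y]) \<longleftrightarrow>
     simple_path V E xs \<and> y \<notin> set xs \<and> y \<in> V \<and> {last xs, y} \<in> E"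
  unfolding simple_path_def using path_edges_snoc[of xs y] by auto

lemma simple_path_appendD1: "simple_path V E (xs @ ys) \<Longrightarrow> xs \<noteq> [] \<Longrightarrow> simple_path V E xs"
  unfolding simple_path_def using path_edges_append_subset_left[of xs ys] by auto

lemma simple_path_appendD2: "simple_path V E (xs @ ys) \<Longrightarrow> ys \<noteq> [] \<Longrightarrow> simple_path V E ys"
  unfolding simple_path_def using path_edges_append_subset_right[of ys xs] by auto

lemma simple_path_rev: "simple_path V E xs \<Longrightarrow> simple_path V E (rev xs)"
  unfolding simple_path_def by (simp add: path_edges_rev)

lemma maximal_two_matching_saturates:
  assumes max: "maximal_two_matching E M" and "finite M"
    and xy: "{x, y} \<in> E" "{x, y} \<notin> M" and x: "degree M x < 2"
  shows "degree M y = 2"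
proof (rule ccontr)
  assume "degree M y \<noteq> 2"
  moreover have "degree M y \<le> 2"
    using max by (simp add: maximal_two_matching_def two_matching_def degree_def)
  ultimately have y: "degree M y < 2" by linarith
  have "two_matching E (insert {x, y} M)"
    unfolding two_matching_def
  proof (intro conjI allI)
    show "insert {x, y} M \<subseteq> E"
      using max xy by (auto simp: maximal_two_matching_def two_matching_def)
  next
    fix v
    show "card {e \<in> insert {x, y} M. v \<in> e} \<le> 2"
    proof (cases "v \<in> {x, y}")
      case True
      then have "{e \<in> insert {x, y} M. v \<in> e} = insert {x, y} {e \<in> M. v \<in> e}" by auto
      moreover have "card {e \<in> M. v \<in> e} < 2" using True x y by (auto simp: degree_def)
      ultimately show ?thesis using \<open>finite M\<close> by (simp add: card_insert_if)
    next
      case False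
      then have "{e \<in> insert {x, y} M. v \<in> e} = {e \<in> M. v \<in> e}" by auto
      then show ?thesis using max by (simp add: maximal_two_matching_def two_matching_def)
    qed
  qed
  then show False using max xy(2) by (auto simp: maximal_two_matching_def)
qed

lemma two_le_degree:
  assumes "finite M" "{v, a} \<in> M" "{v, b} \<in> M" "a \<noteq> b"
  shows "2 \<le> degree M v"
proof -
  have "{{v, a}, {v, b}} \<subseteq> {e \<in> M. v \<in> e}" using assms by auto
  moreover have "card {{v, a}, {v, b}} = 2" using assms(4) by (auto simp: doubleton_eq_iff)
  ultimately show ?thesis
    unfolding degree_def using assms(1) by (metis (no_types, lifting) card_mono finite_subset mem_Collect_eq subsetI)
qed

locale tree_graph =
  fixes V :: "'a set" and E :: "'a set set"
  assumes tree: "is_tree V E"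
begin

lemma finite_V: "finite V"
  using tree by (simp add: is_tree_def simple_graph_def)

lemma edge_cases: "e \<in> E \<Longrightarrow> \<exists>a b. a \<noteq> b \<and> a \<in> V \<and> b \<in> V \<and> e = {a, b}"
  using tree by (auto simp: is_tree_def simple_graph_def)

lemma edgeD: "{a, b} \<in> E \<Longrightarrow> a \<noteq> b \<and> a \<in> V \<and> b \<in> V"
  using edge_cases[of "{a, b}"] by (auto simp: doubleton_eq_iff)

lemma finite_E: "finite E"
proof -
  have "E \<subseteq> Pow V" using edge_cases by blast
  then show ?thesis using finite_V by (meson finite_Pow_iff finite_subset)
qed

lemma simple_path_length_le: "simple_path V E p \<Longrightarrow> length p \<le> card V"
  unfolding simple_path_def using finite_V by (metis card_mono distinct_card)

lemma finite_simple_paths: "finite {p. simple_path V E p}"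
proof -
  have "{p. simple_path V E p} \<subseteq> {p. set p \<subseteq> V \<and> length p \<le> card V}"
    using simple_path_length_le by (auto simp: simple_path_def)
  then show ?thesis using finite_lists_length_le[OF finite_V] finite_subset by blast
qed

lemma exists_neighbour:
  assumes "2 \<le> card V" "x \<in> V"
  obtains y where "{x, y} \<in> E"
proof -
  obtain z where z: "z \<in> V" "z \<noteq> x"
    using assms by (metis card_le_Suc0_iff_eq finite_V not_less_eq_eq numeral_2_eq_2)
  then obtain p where p: "is_path V E p x z"
    using tree assms(2) unfolding is_tree_def connected_graph_def by blast
  then have "2 \<le> length p"
    using z(2) by (cases p rule: path_edges.cases) (auto simp: is_path_def)
  then have "{hd p, hd (tl p)} \<in> E"
    using p by (cases p rule: path_edges.cases) (auto simp: is_path_def)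
  then show ?thesis using p that by (auto simp: is_path_def)
qed

text \<open>The only way back from the end of a simple path is the edge it came along;
  any other would close a cycle.\<close>

lemma simple_path_back_edge:
  assumes q: "simple_path V E q" and e: "{last q, y} \<in> E" and y: "y \<in> set q"
  shows "y = last (butlast q)"
proof -
  obtain i where i: "i < length q" "q ! i = y" using y by (metis in_set_conv_nth)
  have "y \<noteq> last q" using edgeD[OF e] by auto
  then have "i \<noteq> length q - 1" using i q by (metis last_conv_nth simple_path_def)
  then have i2: "i + 2 \<le> length q" using i by linarith
  show ?thesis
  proof (cases "i + 2 = length q")
    case True
    then have "butlast q \<noteq> []" by (cases q) auto
    then have "last (butlast q) = butlast q ! i" by (simp add: last_conv_nth flip: True)
    then show ?thesis using i True by (simp add: nth_butlast)
  next
    case False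
    define c where "c = drop i q"
    have "is_cycle V E c"
      unfolding is_cycle_def
    proof (intro conjI)
      show "3 \<le> length c" using i2 False c_def by simp
      show "distinct c" "set c \<subseteq> V" "path_edges c \<subseteq> E"
        using q path_edges_append_subset_right[of c "take i q"] set_drop_subset[of i q]
        unfolding c_def simple_path_def by auto
      have "last c = last q" "hd c = y" using c_def i by (simp_all add: last_drop hd_drop_conv_nth)
      then show "{last c, hd c} \<in> E" using e by simp
    qed
    then show ?thesis using tree by (simp add: is_tree_def)
  qed
qed

lemma simple_path_extend:
  assumes "simple_path V E q" "{last q, y} \<in> E" "y \<noteq> last (butlast q)"
  shows "simple_path V E (q @ [y])"
proof -
  have "q \<noteq> []" using assms(1) by (simp add: simple_path_def)
  moreover have "y \<notin> set q" using simple_path_back_edge[OF assms(1,2)] assms(3) by blast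
  moreover have "y \<in> V" using edgeD[OF assms(2)] by blast
  ultimately show ?thesis using simple_path_snoc[of q V E y] assms(1,2) by blast
qed

lemma simple_path_join:
  "simple_path V E (xs @ [c]) \<Longrightarrow> simple_path V E (c # ys) \<Longrightarrow> xs \<noteq> [] \<Longrightarrow>
   (ys \<noteq> [] \<Longrightarrow> hd ys \<noteq> last xs) \<Longrightarrow> simple_path V E (xs @ c # ys)"
proof (induction ys rule: rev_induct)
  case (snoc y zs)
  have "simple_path V E (c # zs)"
    using simple_path_appendD1[of V E "c # zs" "[y]"] snoc.prems(2) by simp
  moreover have "zs \<noteq> [] \<Longrightarrow> hd zs \<noteq> last xs" using snoc.prems(4) by simp
  ultimately have IH: "simple_path V E (xs @ c # zs)"
    using snoc.IH snoc.prems(1,3) by blast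
  have "c # zs \<noteq> []" by simp
  then have y: "y \<notin> set (c # zs)" "{last (c # zs), y} \<in> E"
    using simple_path_snoc[of "c # zs" V E y] snoc.prems(2) by auto
  have "y \<noteq> last (butlast (xs @ c # zs))"
  proof (cases zs)
    case Nil
    then have "last (butlast (xs @ c # zs)) = last xs" by simp
    then show ?thesis using snoc.prems(4) Nil by simp
  next
    case (Cons z zs')
    then have "last (butlast (xs @ c # zs)) = last (c # butlast zs)" by (simp add: butlast_append)
    moreover have "set (c # butlast zs) \<subseteq> set (c # zs)" by (auto dest: in_set_butlastD)
    ultimately show ?thesis using y(1) last_in_set[of "c # butlast zs"] by auto
  qed
  then have "simple_path V E ((xs @ c # zs) @ [y])"
    using simple_path_extend[OF IH] y(2) by simp
  then show ?case by simp
qed simp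

lemma leafI:
  assumes "e \<in> V" "{d, e} \<in> E" "\<And>y. {e, y} \<in> E \<Longrightarrow> y = d"
  shows "is_leaf V E e"
proof -
  have "{x \<in> E. e \<in> x} = {{d, e}}"
  proof (intro set_eqI iffI)
    fix x assume x: "x \<in> {x \<in> E. e \<in> x}"
    then obtain a where "x = {e, a}" using edge_cases[of x] by (auto simp: insert_commute)
    then show "x \<in> {{d, e}}" using x assms(3)[of a] by (auto simp: insert_commute)
  qed (use assms in auto)
  then show ?thesis using assms(1) by (simp add: is_leaf_def degree_def)
qed

end

locale tree_two_matching = tree_graph +
  fixes M :: "'a set set"
  assumes maximal: "maximal_two_matching E M"
begin

lemma M_subset_E: "M \<subseteq> E"
  using maximal by (simp add: maximal_two_matching_def two_matching_def)

lemma finite_M: "finite M"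
  using M_subset_E finite_E finite_subset by blast

lemma saturates: "{x, y} \<in> E \<Longrightarrow> {x, y} \<notin> M \<Longrightarrow> degree M x < 2 \<Longrightarrow> degree M y = 2"
  using maximal_two_matching_saturates[OF maximal finite_M] .

lemma other_matched_neighbour:
  assumes "2 \<le> degree M v"
  obtains w where "{v, w} \<in> M" "w \<noteq> d"
proof -
  have "card ({e \<in> M. v \<in> e} - {{v, d}}) \<noteq> 0"
    using assms finite_M by (auto simp: degree_def card_Diff_singleton_if)
  then obtain e where e: "e \<in> M" "v \<in> e" "e \<noteq> {v, d}"
    by (metis (no_types, lifting) DiffE card.empty ex_in_conv mem_Collect_eq singletonI)
  then obtain w where "e = {v, w}" using edge_cases[of e] M_subset_E by (auto simp: insert_commute)
  then show ?thesis using e that by blast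
qed

lemma extend_along_matching:
  "simple_path V E q \<Longrightarrow> 2 \<le> length q \<Longrightarrow> {last (butlast q), last q} \<in> M \<Longrightarrow>
   \<exists>r. simple_path V E (q @ r) \<and> path_edges (last q # r) \<subseteq> M \<and> degree M (last (q @ r)) \<le> 1"
proof (induction "card V - length q" arbitrary: q rule: less_induct)
  case less
  show ?case
  proof (cases "degree M (last q) \<le> 1")
    case True
    then show ?thesis using less.prems by (intro exI[of _ "[]"]) simp
  next
    case False
    then have "2 \<le> degree M (last q)" by simp
    then obtain w where w: "{last q, w} \<in> M" "w \<noteq> last (butlast q)"
      using other_matched_neighbour by blast
    then have qw: "simple_path V E (q @ [w])"
      using simple_path_extend less.prems(1) M_subset_E by blast
    have "card V - length (q @ [w]) < card V - length q"
      using simple_path_length_le[OF qw] by simp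
    moreover have "2 \<le> length (q @ [w])" "{last (butlast (q @ [w])), last (q @ [w])} \<in> M"
      using less.prems(2) w(1) by simp_all
    ultimately obtain r where "simple_path V E ((q @ [w]) @ r)" "path_edges (w # r) \<subseteq> M"
      "degree M (last ((q @ [w]) @ r)) \<le> 1"
      using less.hyps[OF _ qw] by auto
    then show ?thesis using w(1) by (intro exI[of _ "w # r"]) auto
  qed
qed

definition admissible_paths :: "'a list set" where
  "admissible_paths = {p. simple_path V E p \<and> admissible M p}"

definition extremal :: "'a list \<Rightarrow> bool" where
  "extremal p \<longleftrightarrow> p \<in> admissible_paths \<and>
     (\<forall>q\<in>admissible_paths. unmatched_count M q \<le> unmatched_count M p \<and>
        (unmatched_count M q = unmatched_count M p \<longrightarrow> length q \<le> length p))"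

lemma extremal_exists:
  assumes "V \<noteq> {}"
  obtains p where "extremal p"
proof -
  let ?A = "admissible_paths" and ?u = "unmatched_count M"
  have finA: "finite ?A"
    using finite_simple_paths by (rule finite_subset[rotated]) (auto simp: admissible_paths_def)
  obtain x where "x \<in> V" using assms by blast
  then have "[x] \<in> ?A" by (simp add: admissible_paths_def simple_path_def)
  then have "?A \<noteq> {}" by blast
  define k where "k = Max (?u ` ?A)"
  define B where "B = {q \<in> ?A. ?u q = k}"
  have finB: "finite B" using finA by (simp add: B_def)
  have "k \<in> ?u ` ?A" unfolding k_def using finA \<open>?A \<noteq> {}\<close> by (intro Max_in) auto
  then have "B \<noteq> {}" by (auto simp: B_def)
  then have "Max (length ` B) \<in> length ` B" using finB by (intro Max_in) auto
  then obtain p where p: "p \<in> B" "length p = Max (length ` B)" by auto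
  have "extremal p"
    unfolding extremal_def
  proof (intro conjI ballI)
    show "p \<in> ?A" using p(1) by (simp add: B_def)
    fix q assume q: "q \<in> ?A"
    show "?u q \<le> ?u p"
      using p(1) Max_ge[OF finite_imageI[OF finA] imageI[OF q]] by (simp add: B_def k_def)
    show "?u q = ?u p \<longrightarrow> length q \<le> length p"
    proof
      assume "?u q = ?u p"
      then have "q \<in> B" using q p(1) by (simp add: B_def)
      then show "length q \<le> length p" using Max_ge[OF finite_imageI[OF finB] imageI[of q B length]] p(2) by simp
    qed
  qed
  then show ?thesis using that by blast
qed

lemma extremal_not_extendable:
  assumes "extremal p" "simple_path V E (p @ [y])" "{last p, y} \<in> M \<or> degree M y = 2"
  shows False
proof -
  have p: "p \<in> admissible_paths" "p \<noteq> []"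
    using assms(1) by (auto simp: extremal_def admissible_paths_def simple_path_def)
  then have "p @ [y] \<in> admissible_paths"
    using assms(2,3) by (simp add: admissible_paths_def admissible_snoc)
  then show False
    using assms(1) p(2) unfolding extremal_def by (force simp: unmatched_count_snoc split: if_splits)
qed

lemma extremal_leaf_criterion:
  assumes "extremal p" and q: "q \<in> admissible_paths" "unmatched_count M p \<le> unmatched_count M q"
    "2 \<le> length q" "{last (butlast q), last q} \<in> M" "degree M (last q) \<le> 1"
  shows "is_leaf V E (last q)"
proof (rule leafI)
  have sq: "simple_path V E q" using q(1) by (simp add: admissible_paths_def)
  then show "last q \<in> V" by (auto simp: simple_path_def)
  show "{last (butlast q), last q} \<in> E" using q(4) M_subset_E by auto
  fix y assume y: "{last q, y} \<in> E"
  show "y = last (butlast q)"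
  proof (rule ccontr)
    assume ne: "y \<noteq> last (butlast q)"
    have "{last q, y} \<notin> M"
      using two_le_degree[OF finite_M _ q(4)[unfolded insert_commute], of y] ne q(5) by auto
    then have "degree M y = 2" using saturates y q(5) by simp
    then have "q @ [y] \<in> admissible_paths"
      using q(1) simple_path_extend[OF sq y ne] sq
      by (simp add: admissible_paths_def admissible_snoc simple_path_def)
    moreover have "unmatched_count M (q @ [y]) > unmatched_count M p"
      using sq q(2) \<open>{last q, y} \<notin> M\<close> by (simp add: unmatched_count_snoc simple_path_def)
    ultimately show False using assms(1) by (force simp: extremal_def)
  qed
qed

lemma extremal_length:
  assumes "extremal p" "2 \<le> card V"
  shows "2 \<le> length p"
proof (rule ccontr)
  assume "\<not> 2 \<le> length p"
  moreover have sp: "simple_path V E p" using assms(1) by (simp add: extremal_def admissible_paths_def)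
  ultimately obtain x where p: "p = [x]" "x \<in> V"
    by (cases p rule: path_edges.cases) (auto simp: simple_path_def)
  obtain y where y: "{x, y} \<in> E" "{x, y} \<in> M \<or> degree M y = 2"
  proof (cases "degree M x < 2")
    case True
    obtain y where "{x, y} \<in> E" using exists_neighbour[OF assms(2) p(2)] .
    then show ?thesis using that saturates True by blast
  next
    case False
    then have "2 \<le> degree M x" by simp
    then obtain y where "{x, y} \<in> M" using other_matched_neighbour by blast
    then show ?thesis using that M_subset_E by blast
  qed
  then have "simple_path V E (p @ [y])" using p sp edgeD[OF y(1)] by (simp add: simple_path_def)
  then show False using extremal_not_extendable[OF assms(1)] y(2) p(1) by simp
qed

lemma extremal_end:
  assumes "extremal p" "2 \<le> length p"
  shows "degree M (last p) \<le> 1" "{last (butlast p), last p} \<in> M"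
proof -
  have sp: "simple_path V E p" and ap: "admissible M p"
    using assms(1) by (auto simp: extremal_def admissible_paths_def)
  show deg: "degree M (last p) \<le> 1"
  proof (rule ccontr)
    assume "\<not> degree M (last p) \<le> 1"
    then have "2 \<le> degree M (last p)" by simp
    then obtain w where w: "{last p, w} \<in> M" "w \<noteq> last (butlast p)"
      using other_matched_neighbour by blast
    then show False
      using extremal_not_extendable[OF assms(1) simple_path_extend[OF sp]] M_subset_E by blast
  qed
  have "butlast p \<noteq> []" using assms(2) by (cases p) auto
  then have "{last (butlast p), last p} \<in> M \<or> degree M (last p) = 2"
    using ap admissible_snoc[of "butlast p" M "last p"] assms(2) by (cases "p = []") auto
  then show "{last (butlast p), last p} \<in> M" using deg by auto
qed

text \<open>If \<open>c\<close> is not the start of the path, it was entered by an edge outside \<open>M\<close>,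
  so it is saturated and the prolongation \<open>r\<close> is nonempty and leaves \<open>c\<close> by a different
  edge; then \<open>a @ c # r\<close> is again admissible with as many non-\<open>M\<close> edges as the path.\<close>

lemma extremal_matched_segment:
  assumes "extremal p" and p: "p = a @ c # b" "b \<noteq> []" "path_edges (c # b) \<subseteq> M"
    and a: "a = [] \<or> {last a, c} \<notin> M"
  obtains r where "simple_path V E (rev b @ c # r)" "path_edges (c # r) \<subseteq> M"
    "is_leaf V E (last (c # r))"
proof -
  have sp: "simple_path V E p" and ap: "admissible M p"
    using assms(1) by (auto simp: extremal_def admissible_paths_def)
  let ?q = "rev b @ [c]"
  have sq: "simple_path V E ?q"
    using simple_path_rev[OF simple_path_appendD2[OF sp[unfolded p(1)]]] by simp
  have "{last (butlast ?q), last ?q} \<in> M" using p(2,3) by (cases b) (auto simp: insert_commute butlast_append)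
  then obtain r where r: "simple_path V E (?q @ r)" "path_edges (c # r) \<subseteq> M"
    "degree M (last (?q @ r)) \<le> 1"
    using extend_along_matching[OF sq] p(2) by (cases b) auto
  have last_eq: "last (?q @ r) = last (c # r)" by (cases "r = []") auto
  have cr: "{last (butlast (c # r)), last (c # r)} \<in> M" if "r \<noteq> []"
  proof -
    have "2 \<le> length (c # r)" using that by (cases r) auto
    then show ?thesis using last_edge_in_path_edges r(2) by blast
  qed
  show ?thesis
  proof (cases "a = []")
    case True
    have LM: "path_edges (?q @ r) \<subseteq> M"
      using r(2) p(3) path_edges_append[of ?q r] path_edges_rev[of "c # b"] by simp
    have len: "2 \<le> length (?q @ r)" using p(2) by (cases b) auto
    have "unmatched_count M p = 0" using p(1,3) True by (simp add: unmatched_count_eq_0_iff)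
    then have "is_leaf V E (last (?q @ r))"
      using extremal_leaf_criterion[OF assms(1), of "?q @ r"] r(1,3) LM len
        last_edge_in_path_edges[OF len]
      by (auto simp: admissible_paths_def admissible_if_path_edges_subset)
    then show ?thesis using that r(1,2) last_eq by simp
  next
    case False
    then have "{last a, c} \<notin> M" using a by simp
    then have "degree M c = 2" using admissible_unmatched_entry[OF ap[unfolded p(1)] False] by simp
    then have "r \<noteq> []" using r(3) by auto
    have "simple_path V E (a @ [c])"
      using simple_path_appendD1[of V E "a @ [c]" b] sp p(1) by simp
    moreover have "simple_path V E (c # r)"
      using simple_path_appendD2[of V E "rev b" "c # r"] r(1) by simp
    moreover have "hd r \<noteq> last a"
      using a False cr \<open>r \<noteq> []\<close> r(2) by (cases r) (auto simp: insert_commute)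
    ultimately have sL: "simple_path V E (a @ c # r)"
      using simple_path_join False by blast
    have aL: "admissible M (a @ c # r)"
      using admissible_replace_matched_tail[OF ap[unfolded p(1)] r(2)] .
    have uL: "unmatched_count M (a @ c # r) = unmatched_count M p"
      using unmatched_count_replace_matched_tail[OF p(3) r(2)] p(1) by simp
    have "is_leaf V E (last (a @ c # r))"
    proof (rule extremal_leaf_criterion[OF assms(1)])
      show "a @ c # r \<in> admissible_paths" using sL aL by (simp add: admissible_paths_def)
      show "unmatched_count M p \<le> unmatched_count M (a @ c # r)" using uL by simp
      show "2 \<le> length (a @ c # r)" using \<open>r \<noteq> []\<close> by (cases r) auto
      show "{last (butlast (a @ c # r)), last (a @ c # r)} \<in> M"
        using cr[OF \<open>r \<noteq> []\<close>] \<open>r \<noteq> []\<close> by (simp add: butlast_append)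
      show "degree M (last (a @ c # r)) \<le> 1" using r(3) \<open>r \<noteq> []\<close> by simp
    qed
    then show ?thesis using that r(1,2) \<open>r \<noteq> []\<close> by simp
  qed
qed

lemma leaf_to_leaf_matching_path:
  assumes "2 \<le> card V"
  shows "\<exists>u v p. is_leaf V E u \<and> is_leaf V E v \<and> u \<noteq> v \<and> is_path V E p u v \<and> path_edges p \<subseteq> M"
proof -
  have "V \<noteq> {}" using assms by auto
  then obtain p where p: "extremal p" using extremal_exists by blast
  have len: "2 \<le> length p" using extremal_length[OF p assms] .
  note p_end = extremal_end[OF p len]
  have "is_leaf V E (last p)"
    using extremal_leaf_criterion[OF p _ order.refl len p_end(2,1)] p by (simp add: extremal_def)
  have "p \<noteq> []" using len by auto
  then obtain a c b where acb: "p = a @ c # b" "path_edges (c # b) \<subseteq> M" "a = [] \<or> {last a, c} \<notin> M"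
    using split_at_last_unmatched_edge by blast
  have "b \<noteq> []"
  proof
    assume "b = []"
    then have "a \<noteq> []" using acb(1) len by auto
    then show False using acb p_end(2) \<open>b = []\<close> by (simp add: butlast_append)
  qed
  then obtain r where r: "simple_path V E (rev b @ c # r)" "path_edges (c # r) \<subseteq> M"
    "is_leaf V E (last (c # r))"
    using extremal_matched_segment[OF p acb(1) _ acb(2,3)] by blast
  let ?L = "rev b @ c # r"
  have "hd ?L = last p" using acb(1) \<open>b \<noteq> []\<close> by (simp add: hd_append hd_rev)
  moreover have "last ?L = last (c # r)" by simp
  moreover have "path_edges ?L \<subseteq> M"
    using acb(2) r(2) path_edges_append[of "rev b @ [c]" r] path_edges_rev[of "c # b"] by simp
  moreover have "hd ?L \<noteq> last ?L"
  proof -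
    have "2 \<le> length ?L" using \<open>b \<noteq> []\<close> by (cases b) auto
    then show ?thesis using r(1) distinct_hd_ne_last[of ?L] unfolding simple_path_def by blast
  qed
  ultimately show ?thesis
    using r(1,3) \<open>is_leaf V E (last p)\<close> unfolding is_path_iff_simple_path
    by (intro exI[of _ "last p"] exI[of _ "last ?L"] exI[of _ ?L]) simp
qed

end

theorem proposition2p3:
  fixes V :: "'a set" and E M :: "'a set set"
  assumes "is_tree V E"
    and "card V \<ge> 2"
    and "maximal_two_matching E M"
  shows "\<exists>u v p. is_leaf V E u \<and> is_leaf V E v \<and> u \<noteq> v \<and>
           is_path V E p u v \<and> path_edges p \<subseteq> M"
proof -
  interpret tree_two_matching V E M
    using assms(1,3) by unfold_locales
  show ?thesis using leaf_to_leaf_matching_path[OF assms(2)] .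
qed

end
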